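(* Let $H$ be a monoid, let $a,c\in H$ and $b,d\in\mathrm{Gpr}\,H$ be such that for every $e\in\mathrm{Gpr}\,H$: if $e\mid ab$ then $e\mid b$, and if $e\mid cd$ then $e\mid d$. If $ab\sim cd$, then $a\sim c$ and $b\sim d$.
   Context: A monoid means a commutative cancellative monoid (written multiplicatively); $H^{\ast}$ is its unit group. $x\sim y$ means $x=uy$ for some $u\in H^{\ast}$. $\mathrm{Gpr}\,H$ is the set of radical generators of $H$: elements $r$ such that for all $b\in H$, $n\in\mathbb{N}$, $r\mid b^n$ implies $r\mid b$. *)

theory Defs
  imports Main
begin

text \<open>Monoids are modelled as a type of class comm_monoid_mult together with an explicit
cancellativity hypothesis. Units are the elements u with u dvd 1 (u dvd 1).\<close>

definition assoc_el :: "'a::comm_monoid_mult \<Rightarrow> 'a \<Rightarrow> bool" where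
  "assoc_el x y \<longleftrightarrow> (\<exists>u. u dvd 1 \<and> x = u * y)"

definition Gpr :: "'a::comm_monoid_mult set" where
  "Gpr = {r. \<forall>b (n::nat). n \<ge> 1 \<longrightarrow> r dvd b ^ n \<longrightarrow> r dvd b}"

end

theory Submission
  imports Defs
begin

text \<open>Since \<open>d\<close> divides \<open>cd \<sim> ab\<close> and \<open>d\<close> is itself a radical generator, the
hypothesis on \<open>ab\<close> gives \<open>d | b\<close>; symmetrically \<open>b | d\<close>. In a cancellative monoid
mutually dividing elements are associated, so \<open>b \<sim> d\<close>, and cancelling \<open>b\<close> from
\<open>ab \<sim> cd \<sim> cb\<close> yields \<open>a \<sim> c\<close>.\<close>

lemma unit_mult:
  fixes u v :: "'a::comm_monoid_mult"
  assumes "u dvd 1" and "v dvd 1"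
  shows "u * v dvd 1"
  using mult_dvd_mono[OF assms] by simp

lemma assoc_el_imp_dvd:
  fixes x y :: "'a::comm_monoid_mult"
  assumes "assoc_el x y"
  shows "y dvd x"
  using assms unfolding assoc_el_def by (auto simp: mult.commute)

lemma assoc_el_sym:
  fixes x y :: "'a::comm_monoid_mult"
  assumes "assoc_el x y"
  shows "assoc_el y x"
proof -
  obtain u where "u dvd 1" and x: "x = u * y"
    using assms unfolding assoc_el_def by blast
  then obtain w where w: "1 = u * w" by blast
  have "y = w * x"
    by (simp add: x mult.assoc[symmetric] mult.commute[of w u] w[symmetric])
  moreover have "w dvd 1"
    using w by (metis dvd_triv_right)
  ultimately show ?thesis
    unfolding assoc_el_def by blast
qed

lemma assoc_el_if_dvd_dvd:
  fixes x y :: "'a::comm_monoid_mult"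
  assumes cancel: "\<And>x y z :: 'a. x * y = x * z \<Longrightarrow> y = z"
    and "x dvd y" and "y dvd x"
  shows "assoc_el y x"
proof -
  obtain s where y: "y = x * s" using \<open>x dvd y\<close> by blast
  obtain t where x: "x = y * t" using \<open>y dvd x\<close> by blast
  have "x * 1 = x * (s * t)"
    using x by (simp add: y mult.assoc)
  then have "s * t = 1" by (rule cancel[symmetric])
  then have "s dvd 1" by (metis dvd_triv_left)
  with y show ?thesis
    unfolding assoc_el_def by (auto simp: mult.commute)
qed

lemma assoc_el_cancel_right:
  fixes a b c d :: "'a::comm_monoid_mult"
  assumes cancel: "\<And>x y z :: 'a. x * y = x * z \<Longrightarrow> y = z"
    and "assoc_el (a * b) (c * d)" and "assoc_el d b"
  shows "assoc_el a c"
proof -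
  obtain u where u: "u dvd 1" and ab: "a * b = u * (c * d)"
    using \<open>assoc_el (a * b) (c * d)\<close> unfolding assoc_el_def by blast
  obtain v where v: "v dvd 1" and d: "d = v * b"
    using \<open>assoc_el d b\<close> unfolding assoc_el_def by blast
  have "b * a = b * (u * v * c)"
    using ab by (simp add: d ac_simps)
  then have "a = u * v * c" by (rule cancel)
  with unit_mult[OF u v] show ?thesis
    unfolding assoc_el_def by blast
qed

theorem proposition5p1:
  fixes a b c d :: "'a::comm_monoid_mult"
  assumes cancel: "\<And>x y z :: 'a. x * y = x * z \<Longrightarrow> y = z"
    and b_Gpr: "b \<in> Gpr" and d_Gpr: "d \<in> Gpr"
    and ab: "\<forall>e \<in> Gpr. e dvd a * b \<longrightarrow> e dvd b"
    and cd: "\<forall>e \<in> Gpr. e dvd c * d \<longrightarrow> e dvd d"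
    and assoc: "assoc_el (a * b) (c * d)"
  shows "assoc_el a c \<and> assoc_el b d"
proof -
  have "d dvd c * d" by simp
  also have "c * d dvd a * b" using assoc by (rule assoc_el_imp_dvd)
  finally have "d dvd b" using ab d_Gpr by blast
  have "b dvd a * b" by simp
  also have "a * b dvd c * d" using assoc_el_sym[OF assoc] by (rule assoc_el_imp_dvd)
  finally have "b dvd d" using cd b_Gpr by blast
  have "assoc_el d b"
    using cancel \<open>b dvd d\<close> \<open>d dvd b\<close> by (rule assoc_el_if_dvd_dvd)
  have "assoc_el a c"
    using cancel assoc \<open>assoc_el d b\<close> by (rule assoc_el_cancel_right)
  with assoc_el_sym[OF \<open>assoc_el d b\<close>] show ?thesis by blast
qed

end
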